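(* Let $\mu$ be a probability measure on $\mathrm{Homeo}_+(\mathbb{R})$ with finite or countable support having the shiftability property. If $\phi_+(x)>0$ for some $x\in\mathbb{R}$, then $\phi_+(y)>0$ for every $y\in\mathbb{R}$. Similarly, if $\phi_-(x)>0$ for some $x$, then $\phi_-(y)>0$ for every $y$.
   Context: Setup. Let $\mu$ be a probability measure on the group $\mathrm{Homeo}_+(\mathbb{R})$ of orientation-preserving homeomorphisms of $\mathbb{R}$, supported on a finite or countable set $\{f_1,f_2,\dots\}$ with $p_i=\mu(\{f_i\})>0$, $\sum_i p_i=1$. Let $g_1,g_2,\dots$ be i.i.d. random maps with law $\mu$, and set $F_0=\mathrm{id}$, $F_n=g_n\circ\cdots\circ g_1$. For $x\in\mathbb{R}$ let $\phi_+(x)=\mathbb{P}(\lim_n F_n(x)=+\infty)$ and $\phi_-(x)=\mathbb{P}(\lim_n F_n(x)=-\infty)$. The system has the shiftability property if for every $x\in\mathbb{R}$ there exist $f,g$ with $\mu(\{f\})>0$, $\mu(\{g\})>0$ and $g(x)<x<f(x)$. *)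

theory Defs
  imports "HOL-Probability.Probability"
begin

definition homeo_plus :: "(real \<Rightarrow> real) \<Rightarrow> bool" where
  "homeo_plus f \<longleftrightarrow> (\<exists>g. homeomorphism UNIV UNIV f g) \<and> strict_mono f"

text \<open>The support of mu is enumerated as f i (i :: nat), with weights pmf p i.
  A sample path is a sequence of indices w :: nat => nat; the random map g_(n+1)
  is f (w n), and F_n = g_n o ... o g_1.\<close>
primrec walk :: "(nat \<Rightarrow> real \<Rightarrow> real) \<Rightarrow> (nat \<Rightarrow> nat) \<Rightarrow> nat \<Rightarrow> real \<Rightarrow> real" where
  "walk f w 0 x = x"
| "walk f w (Suc n) x = f (w n) (walk f w n x)"

definition path_space :: "nat pmf \<Rightarrow> (nat \<Rightarrow> nat) measure" where
  "path_space p = (\<Pi>\<^sub>M n\<in>UNIV. measure_pmf p)"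

definition phi_plus :: "nat pmf \<Rightarrow> (nat \<Rightarrow> real \<Rightarrow> real) \<Rightarrow> real \<Rightarrow> real" where
  "phi_plus p f x = measure (path_space p)
     {w \<in> space (path_space p). filterlim (\<lambda>n. walk f w n x) at_top sequentially}"

definition phi_minus :: "nat pmf \<Rightarrow> (nat \<Rightarrow> real \<Rightarrow> real) \<Rightarrow> real \<Rightarrow> real" where
  "phi_minus p f x = measure (path_space p)
     {w \<in> space (path_space p). filterlim (\<lambda>n. walk f w n x) at_bot sequentially}"

definition shiftable :: "nat pmf \<Rightarrow> (nat \<Rightarrow> real \<Rightarrow> real) \<Rightarrow> bool" where
  "shiftable p f \<longleftrightarrow> (\<forall>x. \<exists>i j. i \<in> set_pmf p \<and> j \<in> set_pmf p \<and> f j x < x \<and> x < f i x)"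

end

theory Submission
  imports Defs
begin

text \<open>Since all maps are non-decreasing, \<open>phi_plus\<close> is non-decreasing, and conditioning on the
  first step gives \<open>pmf p i * phi_plus (f i y) \<le> phi_plus y\<close>; hence positivity of \<open>phi_plus\<close>
  propagates backwards along the forward orbit of \<open>y\<close> under the support maps. By continuity
  and shiftability that orbit is unbounded above (a finite supremum \<open>s\<close> would be pushed beyond
  itself by a map with \<open>s < f i s\<close>), so it reaches any \<open>x\<close> with \<open>phi_plus x > 0\<close>. The statement
  for \<open>phi_minus\<close> follows by conjugating all maps with \<open>x \<mapsto> -x\<close>.\<close>

abbreviation escapes_to_top :: "nat pmf \<Rightarrow> (nat \<Rightarrow> real \<Rightarrow> real) \<Rightarrow> real \<Rightarrow> (nat \<Rightarrow> nat) set" where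
  "escapes_to_top p f x \<equiv>
     {w \<in> space (path_space p). filterlim (\<lambda>n. walk f w n x) at_top sequentially}"

lemma prob_space_path_space: "prob_space (path_space p)"
  unfolding path_space_def by (intro prob_space_PiM prob_space_measure_pmf)

lemma walk_case_nat_Suc: "walk f (case_nat i w) (Suc n) y = walk f w n (f i y)"
  by (induction n) auto

lemma measurable_path_space_component:
  "(\<lambda>w. w n) \<in> path_space p \<rightarrow>\<^sub>M count_space UNIV"
proof -
  have "(\<lambda>w. w n) \<in> (\<Pi>\<^sub>M n\<in>UNIV. measure_pmf p) \<rightarrow>\<^sub>M measure_pmf p" by measurable
  then show ?thesis unfolding path_space_def
    using measurable_cong_sets[OF refl sets_measure_pmf_count_space[of p]] by blast
qed

text \<open>No measurability of the maps \<open>f i\<close> is needed: the index set is countable, so the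
  induction splits over the value of the current step.\<close>
lemma measurable_comp_walk:
  "(\<lambda>w. h (walk f w n y)) \<in> borel_measurable (path_space p)"
proof (induction n arbitrary: h)
  case 0
  then show ?case by simp
next
  case (Suc n)
  have "(\<lambda>w. (\<lambda>i w. h (f i (walk f w n y))) (w n) w) \<in> borel_measurable (path_space p)"
    by (rule measurable_compose_countable'[where I=UNIV, OF _ measurable_path_space_component])
      (use Suc.IH in \<open>auto intro: countableI_type\<close>)
  then show ?case by simp
qed

lemma filterlim_at_top_iff_nat_bounds:
  "filterlim (X :: nat \<Rightarrow> real) at_top sequentially \<longleftrightarrow> (\<forall>K::nat. \<exists>N. \<forall>n\<ge>N. real K \<le> X n)"
proof
  assume "filterlim X at_top sequentially"
  then show "\<forall>K::nat. \<exists>N. \<forall>n\<ge>N. real K \<le> X n"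
    by (simp add: filterlim_at_top eventually_sequentially)
next
  assume bounds: "\<forall>K::nat. \<exists>N. \<forall>n\<ge>N. real K \<le> X n"
  show "filterlim X at_top sequentially"
    unfolding filterlim_at_top eventually_sequentially
  proof
    fix Z :: real
    obtain K :: nat where "Z \<le> real K" using real_arch_simple by blast
    with bounds show "\<exists>N. \<forall>n\<ge>N. Z \<le> X n" by (meson order_trans)
  qed
qed

lemma sets_escapes_to_top: "escapes_to_top p f x \<in> sets (path_space p)"
proof -
  have [measurable]: "\<And>n. (\<lambda>w. walk f w n x) \<in> borel_measurable (path_space p)"
    using measurable_comp_walk[where h="\<lambda>x. x"] by simp
  show ?thesis unfolding filterlim_at_top_iff_nat_bounds by measurable
qed

lemma case_nat_escapes_to_top:
  assumes "w \<in> escapes_to_top p f (f i y)"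
  shows "case_nat i w \<in> escapes_to_top p f y"
proof -
  have "filterlim (\<lambda>n. walk f (case_nat i w) (Suc n) y) at_top sequentially"
    using assms by (simp only: walk_case_nat_Suc mem_Collect_eq)
  then have "filterlim (\<lambda>n. walk f (case_nat i w) n y) at_top sequentially"
    by (rule filterlim_sequentially_Suc[THEN iffD1])
  moreover have "case_nat i w \<in> space (path_space p)"
    by (simp add: path_space_def space_PiM)
  ultimately show ?thesis by simp
qed

lemma path_space_eq_distr_case_nat:
  "path_space p = distr (measure_pmf p \<Otimes>\<^sub>M path_space p) (path_space p) (\<lambda>(s, \<omega>). case_nat s \<omega>)"
proof -
  interpret sequence_space "measure_pmf p"
    by (simp add: sequence_space_def product_prob_space_def product_sigma_finite_def
          prob_space_measure_pmf prob_space_imp_sigma_finite product_prob_space_axioms_def)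
  show ?thesis using PiM_iter by (simp add: path_space_def)
qed

lemma pmf_mult_phi_plus_step_le: "pmf p i * phi_plus p f (f i y) \<le> phi_plus p f y"
proof -
  let ?M = "measure_pmf p" and ?S = "path_space p"
  let ?MS = "?M \<Otimes>\<^sub>M ?S" and ?cons = "\<lambda>(s, \<omega>). case_nat s \<omega>"
  interpret S: prob_space ?S by (rule prob_space_path_space)
  interpret P: pair_prob_space ?M ?S
    by (simp add: pair_prob_space_def pair_sigma_finite_def prob_space_measure_pmf
        prob_space_imp_sigma_finite S.prob_space_axioms)
  have cons: "?cons \<in> ?MS \<rightarrow>\<^sub>M ?S"
    unfolding path_space_def by measurable
  have "pmf p i * phi_plus p f (f i y) = measure ?MS ({i} \<times> escapes_to_top p f (f i y))"
  proof -
    have "emeasure ?MS ({i} \<times> escapes_to_top p f (f i y))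
        = emeasure ?M {i} * emeasure ?S (escapes_to_top p f (f i y))"
      by (intro S.emeasure_pair_measure_Times sets_escapes_to_top) auto
    then show ?thesis
      by (simp add: measure_def phi_plus_def enn2real_mult emeasure_pmf_single)
  qed
  also have "\<dots> \<le> measure ?MS (?cons -` escapes_to_top p f y \<inter> space ?MS)"
  proof (rule P.finite_measure_mono)
    show "{i} \<times> escapes_to_top p f (f i y) \<subseteq> ?cons -` escapes_to_top p f y \<inter> space ?MS"
    proof
      fix z assume "z \<in> {i} \<times> escapes_to_top p f (f i y)"
      then obtain w where "z = (i, w)" and w: "w \<in> escapes_to_top p f (f i y)" by blast
      then show "z \<in> ?cons -` escapes_to_top p f y \<inter> space ?MS"
        using case_nat_escapes_to_top[OF w] by (simp add: space_pair_measure)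
    qed
  qed (rule measurable_sets[OF cons sets_escapes_to_top])
  also have "\<dots> = measure (distr ?MS ?S ?cons) (escapes_to_top p f y)"
    by (rule measure_distr[OF cons sets_escapes_to_top, symmetric])
  also have "\<dots> = phi_plus p f y"
    by (simp only: phi_plus_def path_space_eq_distr_case_nat[symmetric])
  finally show ?thesis .
qed

lemma phi_plus_mono:
  assumes mono: "\<And>i. i \<in> set_pmf p \<Longrightarrow> mono (f i)" and "y \<le> z"
  shows "phi_plus p f y \<le> phi_plus p f z"
proof -
  interpret prob_space "path_space p" by (rule prob_space_path_space)
  have in_support: "AE w in path_space p. \<forall>n. w n \<in> set_pmf p"
    unfolding AE_all_countable path_space_def
    by (intro allI AE_PiM_component[where M="\<lambda>_. measure_pmf p"] prob_space_measure_pmf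
        AE_measure_pmf) auto
  have walk_le: "walk f w n y \<le> walk f w n z" if "\<forall>n. w n \<in> set_pmf p" for w n
    using that by (induction n) (auto simp: \<open>y \<le> z\<close> intro: monoD[OF mono])
  have "AE w in path_space p. w \<in> escapes_to_top p f y \<longrightarrow> w \<in> escapes_to_top p f z"
    using in_support
  proof eventually_elim
    case (elim w)
    show ?case
      using filterlim_at_top_mono[of "\<lambda>n. walk f w n y" sequentially "\<lambda>n. walk f w n z"]
        walk_le[OF elim] by auto
  qed
  then show ?thesis unfolding phi_plus_def
    by (intro finite_measure_mono_AE sets_escapes_to_top) (auto elim: AE_mp)
qed

inductive_set forward_orbit :: "nat set \<Rightarrow> (nat \<Rightarrow> real \<Rightarrow> real) \<Rightarrow> real \<Rightarrow> real set"
  for S f y where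
  base: "y \<in> forward_orbit S f y"
| step: "z \<in> forward_orbit S f y \<Longrightarrow> i \<in> S \<Longrightarrow> f i z \<in> forward_orbit S f y"

lemma phi_plus_pos_if_pos_on_forward_orbit:
  assumes "z \<in> forward_orbit (set_pmf p) f y" and "phi_plus p f z > 0"
  shows "phi_plus p f y > 0"
  using assms
proof (induction rule: forward_orbit.induct)
  case base
  then show ?case .
next
  case (step z i)
  have "0 < pmf p i" using step.hyps(2) by (simp add: pmf_positive)
  then have "0 < pmf p i * phi_plus p f (f i z)" using step.prems by simp
  also have "\<dots> \<le> phi_plus p f z" by (rule pmf_mult_phi_plus_step_le)
  finally show ?case by (rule step.IH)
qed

lemma forward_orbit_unbounded_above:
  assumes cont: "\<And>i. i \<in> S \<Longrightarrow> continuous_on UNIV (f i)"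
    and up: "\<And>x. \<exists>i\<in>S. x < f i x"
  shows "\<exists>z\<in>forward_orbit S f y. x \<le> z"
proof (rule ccontr)
  let ?R = "forward_orbit S f y"
  assume "\<not> ?thesis"
  then have "\<And>z. z \<in> ?R \<Longrightarrow> z \<le> x" by auto
  then have bdd: "bdd_above ?R" by (rule bdd_aboveI)
  have ne: "?R \<noteq> {}" using forward_orbit.base by blast
  define s where "s = Sup ?R"
  obtain i where i: "i \<in> S" "s < f i s" using up by blast
  have "isCont (f i) s" using cont[OF i(1)] by (simp add: continuous_on_eq_continuous_at)
  then obtain d where d: "d > 0" "\<And>u. dist u s < d \<Longrightarrow> dist (f i u) (f i s) < f i s - s"
    using i(2) unfolding continuous_at_eps_delta by (metis diff_gt_0_iff_gt)
  have "s - d < Sup ?R" using d(1) unfolding s_def by simp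
  then obtain u where u: "u \<in> ?R" "s - d < u" using less_cSup_iff[OF ne bdd] by blast
  have "u \<le> s" unfolding s_def using u(1) bdd by (rule cSup_upper)
  then have "dist (f i u) (f i s) < f i s - s" using u(2) by (intro d(2)) (simp add: dist_real_def)
  then have "s < f i u" by (simp add: dist_real_def abs_less_iff)
  moreover have "f i u \<le> s"
    unfolding s_def using forward_orbit.step[OF u(1) i(1)] bdd by (rule cSup_upper)
  ultimately show False by simp
qed

lemma phi_plus_pos_everywhere:
  assumes mono: "\<And>i. i \<in> set_pmf p \<Longrightarrow> mono (f i)"
    and cont: "\<And>i. i \<in> set_pmf p \<Longrightarrow> continuous_on UNIV (f i)"
    and up: "\<And>x. \<exists>i\<in>set_pmf p. x < f i x"
    and pos: "phi_plus p f x > 0"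
  shows "phi_plus p f y > 0"
proof -
  obtain z where z: "z \<in> forward_orbit (set_pmf p) f y" "x \<le> z"
    using forward_orbit_unbounded_above[OF cont up] by blast
  have "phi_plus p f x \<le> phi_plus p f z" by (rule phi_plus_mono[OF mono z(2)])
  with pos have "phi_plus p f z > 0" by simp
  with z(1) show ?thesis by (rule phi_plus_pos_if_pos_on_forward_orbit)
qed

lemma walk_conj_uminus: "walk (\<lambda>i x. - f i (- x)) w n x = - walk f w n (- x)"
  by (induction n) auto

lemma phi_minus_eq_phi_plus_conj_uminus: "phi_minus p f x = phi_plus p (\<lambda>i x. - f i (- x)) (- x)"
proof -
  have "filterlim (\<lambda>n. walk f w n x) at_bot sequentially \<longleftrightarrow>
        filterlim (\<lambda>n. walk (\<lambda>i x. - f i (- x)) w n (- x)) at_top sequentially" for w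
    using filterlim_uminus_at_top[of "\<lambda>n. - walk f w n x" sequentially]
    by (simp add: walk_conj_uminus)
  then show ?thesis unfolding phi_minus_def phi_plus_def by simp
qed

lemma phi_minus_pos_everywhere:
  assumes mono: "\<And>i. i \<in> set_pmf p \<Longrightarrow> mono (f i)"
    and cont: "\<And>i. i \<in> set_pmf p \<Longrightarrow> continuous_on UNIV (f i)"
    and down: "\<And>x. \<exists>i\<in>set_pmf p. f i x < x"
    and pos: "phi_minus p f x > 0"
  shows "phi_minus p f y > 0"
proof -
  let ?g = "\<lambda>i x. - f i (- x)"
  have "mono (?g i)" if "i \<in> set_pmf p" for i
    using mono[OF that] by (auto simp: mono_def)
  moreover have "continuous_on UNIV (?g i)" if "i \<in> set_pmf p" for i
    by (intro continuous_intros continuous_on_compose2[OF cont[OF that]]) auto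
  moreover have "\<exists>i\<in>set_pmf p. x < ?g i x" for x
    using down[of "- x"] by force
  ultimately show ?thesis
    using phi_plus_pos_everywhere[of p ?g "- x" "- y"] pos
    unfolding phi_minus_eq_phi_plus_conj_uminus by blast
qed

theorem lemma2:
  fixes p :: "nat pmf" and f :: "nat \<Rightarrow> real \<Rightarrow> real"
  assumes homeo: "\<And>i. i \<in> set_pmf p \<Longrightarrow> homeo_plus (f i)"
    and shift: "shiftable p f"
  shows "((\<exists>x. phi_plus p f x > 0) \<longrightarrow> (\<forall>y. phi_plus p f y > 0))
       \<and> ((\<exists>x. phi_minus p f x > 0) \<longrightarrow> (\<forall>y. phi_minus p f y > 0))"
proof -
  have mono: "\<And>i. i \<in> set_pmf p \<Longrightarrow> mono (f i)"
    using homeo unfolding homeo_plus_def by (simp add: strict_mono_mono)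
  have cont: "\<And>i. i \<in> set_pmf p \<Longrightarrow> continuous_on UNIV (f i)"
    using homeo unfolding homeo_plus_def homeomorphism_def by blast
  have up: "\<And>x. \<exists>i\<in>set_pmf p. x < f i x"
    and down: "\<And>x. \<exists>i\<in>set_pmf p. f i x < x"
    using shift unfolding shiftable_def by blast+
  show ?thesis
    using phi_plus_pos_everywhere[OF mono cont up] phi_minus_pos_everywhere[OF mono cont down]
    by blast
qed

end
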